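(* Let $q$ be a prime power, let $1\le k\le m$ be integers, and let $C\subseteq \mathbb{F}_{q^m}^k$ be a non-zero $\mathbb{F}_{q^m}$-linear code of dimension $1\le t\le k$ over $\mathbb{F}_{q^m}$. For any integer $1\le r\le t$ we have $$m_r(C)=\min\{\dim_{\mathbb{F}_{q^m}}(A) : A\in \mathcal{A}^G_q(k,m),\ \dim_{\mathbb{F}_{q^m}}(A\cap C)\ge r\}.$$
   Context: For $v\in\mathbb{F}_{q^m}^k$, $\mathrm{rk}(v):=\dim_{\mathbb{F}_q}\mathrm{Span}_{\mathbb{F}_q}\{v_1,\dots,v_k\}$, and for a subspace $C$, $\mathrm{maxrk}(C):=\max\{\mathrm{rk}(c):c\in C\}$. $\mathcal{A}^G_q(k,m)$ is the set of $\mathbb{F}_{q^m}$-subspaces $A\subseteq\mathbb{F}_{q^m}^k$ with $\dim_{\mathbb{F}_{q^m}}(A)=\mathrm{maxrk}(A)$. A subspace $V\subseteq\mathbb{F}_{q^m}^k$ is Frobenius-closed if $(v_1^q,\dots,v_k^q)\in V$ whenever $v\in V$; $\Lambda_q(k,m)$ is the set of such subspaces. The $r$-th generalized rank weight is $m_r(C):=\min\{\dim_{\mathbb{F}_{q^m}}(V): V\in\Lambda_q(k,m),\ \dim_{\mathbb{F}_{q^m}}(V\cap C)\ge r\}$. *)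

theory Defs
  imports Complex_Main "HOL-Library.Function_Algebras" "HOL-Library.Cardinality" "HOL-Computational_Algebra.Primes"
begin

text \<open>Ambient field F_{q^m} is a finite field type 'a with CARD('a) = q^m.
  Vectors of F_{q^m}^k are functions 'n => 'a with CARD('n) = k.\<close>

definition vsc :: "'a::field \<Rightarrow> ('n \<Rightarrow> 'a) \<Rightarrow> ('n \<Rightarrow> 'a)" where
  "vsc c v = (\<lambda>i. c * v i)"

abbreviation vsubspace :: "('n \<Rightarrow> 'a::field) set \<Rightarrow> bool" where
  "vsubspace V \<equiv> module.subspace vsc V"

abbreviation vdim :: "('n \<Rightarrow> 'a::field) set \<Rightarrow> nat" where
  "vdim V \<equiv> vector_space.dim vsc V"

text \<open>The subfield F_q of F_{q^m}: the fixed points of x |-> x^q.\<close>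
definition Fsub :: "nat \<Rightarrow> 'a::field set" where
  "Fsub q = {x. x ^ q = x}"

definition span_over :: "'a::field set \<Rightarrow> 'a set \<Rightarrow> 'a set" where
  "span_over K S = {x. \<exists>F c. finite F \<and> F \<subseteq> S \<and> (\<forall>a\<in>F. c a \<in> K) \<and> x = (\<Sum>a\<in>F. c a * a)}"

definition dim_over :: "'a::field set \<Rightarrow> 'a set \<Rightarrow> nat" where
  "dim_over K V = (LEAST n. \<exists>B. finite B \<and> card B = n \<and> B \<subseteq> V \<and> span_over K B = V)"

definition rk :: "nat \<Rightarrow> ('n \<Rightarrow> 'a::field) \<Rightarrow> nat" where
  "rk q v = dim_over (Fsub q) (span_over (Fsub q) (range v))"

definition maxrk :: "nat \<Rightarrow> ('n::finite \<Rightarrow> 'a::{field,finite}) set \<Rightarrow> nat" where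
  "maxrk q C = Max (rk q ` C)"

definition AG :: "nat \<Rightarrow> ('n::finite \<Rightarrow> 'a::{field,finite}) set set" where
  "AG q = {A. vsubspace A \<and> vdim A = maxrk q A}"

definition frob_vec :: "nat \<Rightarrow> ('n \<Rightarrow> 'a::field) \<Rightarrow> ('n \<Rightarrow> 'a)" where
  "frob_vec q v = (\<lambda>i. v i ^ q)"

definition Lam :: "nat \<Rightarrow> ('n::finite \<Rightarrow> 'a::{field,finite}) set set" where
  "Lam q = {V. vsubspace V \<and> (\<forall>v\<in>V. frob_vec q v \<in> V)}"

definition gen_rank_weight :: "nat \<Rightarrow> ('n::finite \<Rightarrow> 'a::{field,finite}) set \<Rightarrow> nat \<Rightarrow> nat" where
  "gen_rank_weight q C r = Min {vdim V | V. V \<in> Lam q \<and> vdim (V \<inter> C) \<ge> r}"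

end

theory Submission
  imports Defs "HOL-Number_Theory.Residues" "HOL-Algebra.Embedded_Algebras"
    "HOL-Computational_Algebra.Polynomial"
begin

text \<open>
  For \<open>k \<le> m\<close> a subspace lies in \<open>A^G_q(k, m)\<close> iff it is Frobenius-closed, so both minima range
  over the same family.

  Let \<open>v\<close> have maximal rank \<open>s\<close> in a subspace \<open>A\<close>. Its coordinates are \<open>F_q\<close>-combinations of \<open>s\<close>
  pivot coordinates, and every \<open>w \<in> A\<close> obeys the same \<open>F_q\<close>-linear relations: otherwise, since
  \<open>s < k \<le> m\<close>, counting the \<open>q^m\<close> scalars yields \<open>c\<close> with \<open>rk (v + c w) > s\<close>. The space of vectors
  obeying these relations is Frobenius-closed and of dimension at most \<open>s\<close>, so \<open>dim A \<le> maxrk A\<close>,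
  with equality only if \<open>A\<close> is that space. Conversely, a Frobenius-closed space containing \<open>v\<close>
  contains \<open>v, v^q, \<dots>, v^(q^(s-1))\<close>. These are linearly independent: a \<open>q\<close>-polynomial
  \<open>\<Sum>_(l<s) b_l X^(q^l)\<close> has degree at most \<open>q^(s-1)\<close>, but if it vanishes on the coordinates of \<open>v\<close>
  it vanishes on their \<open>F_q\<close>-span, which has \<open>q^s\<close> elements.
\<close>

section \<open>Finite fields as rings\<close>

definition field_ring :: "'a::field ring" where
  "field_ring = \<lparr>carrier = UNIV, mult = (*), one = 1, zero = 0, add = (+)\<rparr>"

lemma field_ring_simps [simp]:
  "carrier field_ring = UNIV" "x \<otimes>\<^bsub>field_ring\<^esub> y = x * y" "x \<oplus>\<^bsub>field_ring\<^esub> y = x + y"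
  "\<one>\<^bsub>field_ring\<^esub> = 1" "\<zero>\<^bsub>field_ring\<^esub> = 0"
  by (simp_all add: field_ring_def)

lemma field_field_ring: "field (field_ring :: 'a::field ring)"
proof -
  have "\<exists>y. x + y = 0" for x :: 'a
    using add.right_inverse by blast
  moreover have "x \<noteq> 0 \<Longrightarrow> \<exists>y. x * y = 1" for x :: 'a
    by (rule exI[of _ "inverse x"]) auto
  ultimately show ?thesis
    unfolding field_ring_def by unfold_locales (auto simp: algebra_simps Units_def)
qed

lemma field_ring_nat_pow [simp]: "x [^]\<^bsub>field_ring\<^esub> (n::nat) = (x::'a::field) ^ n"
  by (induction n) auto

lemma field_ring_a_inv [simp]: "\<ominus>\<^bsub>field_ring\<^esub> (x::'a::field) = - x"
proof -
  interpret field field_ring by (rule field_field_ring)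
  show ?thesis by (rule minus_equality) auto
qed

lemma field_ring_m_inv: "(x::'a::field) \<noteq> 0 \<Longrightarrow> inv\<^bsub>field_ring\<^esub> x = inverse x"
proof -
  interpret field field_ring by (rule field_field_ring)
  assume "x \<noteq> 0"
  then show ?thesis by (intro inv_char) (auto simp: field_Units)
qed

lemma power_card_minus_1_eq_1:
  fixes x :: "'a::{field,finite}"
  assumes "x \<noteq> 0"
  shows "x ^ (CARD('a) - 1) = 1"
proof -
  interpret field "field_ring :: 'a ring" by (rule field_field_ring)
  have "x [^]\<^bsub>mult_of field_ring\<^esub> Coset.order (mult_of (field_ring :: 'a ring)) = \<one>\<^bsub>mult_of field_ring\<^esub>"
    using group.pow_order_eq_1[OF field_mult_group, of x] assms by simp
  then show ?thesis
    by (simp add: order_mult_of Coset.order_def nat_pow_mult_of)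
qed

lemma card_roots_of_unity_ge:
  fixes d :: nat
  assumes "0 < d" and "d dvd CARD('a::{field,finite}) - 1"
  shows "d \<le> card {x::'a. x ^ d = 1}"
proof -
  define N where "N = CARD('a) - 1"
  obtain T where NT: "N = d * T" using assms(2) N_def by blast
  have "card {0, 1::'a} \<le> CARD('a)" by (rule card_mono) auto
  then have "0 < T" using NT N_def by (cases T) auto
  define H :: "'a poly" where "H = (\<Sum>j<T. monom 1 (d * j))"
  have poly_H: "poly H x = (\<Sum>j<T. (x ^ d) ^ j)" for x
    by (simp add: H_def poly_sum poly_monom power_mult)
  have "coeff H 0 = (\<Sum>j<T. if j = 0 then 1 else 0)"
    using assms(1) by (simp add: H_def coeff_sum)
  also have "\<dots> = 1" using \<open>0 < T\<close> by (simp add: sum.delta)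
  finally have "H \<noteq> 0" by auto
  have "degree H \<le> d * (T - 1)"
    unfolding H_def
    by (rule degree_sum_le) (auto simp: degree_monom_eq intro: order.trans[OF degree_monom_le])
  \<comment> \<open>A non-zero \<open>x\<close> with \<open>x ^ d \<noteq> 1\<close> is a root of \<open>H\<close>, because \<open>(x ^ d - 1) * H(x) = x ^ N - 1 = 0\<close>.\<close>
  have "UNIV - {0} \<subseteq> {x::'a. x ^ d = 1} \<union> {x. poly H x = 0}"
  proof
    fix x :: 'a assume "x \<in> UNIV - {0}"
    then have "x ^ N = 1"
      using power_card_minus_1_eq_1[of x] by (simp add: N_def)
    then have "(x ^ d) ^ T = 1"
      by (simp add: NT power_mult)
    then have "(x ^ d - 1) * poly H x = 0"
      using power_diff_1_eq[of "x ^ d" T] by (simp add: poly_H)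
    then show "x \<in> {x. x ^ d = 1} \<union> {x. poly H x = 0}" by auto
  qed
  then have "N \<le> card ({x::'a. x ^ d = 1} \<union> {x. poly H x = 0})"
    using card_mono[of _ "UNIV - {0::'a}"] by (force simp: N_def)
  also have "\<dots> \<le> card {x::'a. x ^ d = 1} + card {x. poly H x = 0}"
    by (rule card_Un_le)
  also have "card {x. poly H x = 0} \<le> d * (T - 1)"
    using card_poly_roots_bound[OF \<open>H \<noteq> 0\<close>] \<open>degree H \<le> d * (T - 1)\<close> by linarith
  finally have "N \<le> card {x::'a. x ^ d = 1} + (N - d)"
    using NT by (simp add: right_diff_distrib')
  moreover have "d \<le> N" using NT \<open>0 < T\<close> by simp
  ultimately show ?thesis by linarith
qed

lemma exists_scalar_avoiding:
  fixes E D :: "'b \<Rightarrow> 'a::{field,finite}"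
  assumes "finite X" and "Suc (card X) < CARD('a)" and "\<And>x. x \<in> X \<Longrightarrow> E x \<noteq> 0"
  obtains c where "c \<noteq> 0" "\<And>x. x \<in> X \<Longrightarrow> E x + c * D x \<noteq> 0"
proof -
  define Bad where "Bad = insert 0 ((\<lambda>x. - E x / D x) ` X)"
  have "card Bad \<le> Suc (card ((\<lambda>x. - E x / D x) ` X))"
    unfolding Bad_def using assms(1) by (simp add: card_insert_if)
  also have "\<dots> \<le> Suc (card X)" using card_image_le[OF assms(1)] by simp
  finally have "Bad \<noteq> UNIV" using assms(2) by auto
  then obtain c where c: "c \<notin> Bad" by blast
  show thesis
  proof (rule that)
    show "c \<noteq> 0" using c by (simp add: Bad_def)
    fix x assume x: "x \<in> X"
    show "E x + c * D x \<noteq> 0"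
    proof
      assume 0: "E x + c * D x = 0"
      then have "D x \<noteq> 0" using assms(3)[OF x] by auto
      then have "c = - E x / D x" using 0 by (simp add: field_simps eq_neg_iff_add_eq_0)
      then show False using c x by (simp add: Bad_def)
    qed
  qed
qed

section \<open>Coordinate vector spaces\<close>

lemma sum_apply: "sum f A x = (\<Sum>a\<in>A. f a x)"
  by (induction A rule: infinite_finite_induct) auto

lemma vsc_apply [simp]: "vsc c v i = c * v i"
  by (simp add: vsc_def)

interpretation vs: vector_space "vsc :: 'a::field \<Rightarrow> ('n \<Rightarrow> 'a) \<Rightarrow> ('n \<Rightarrow> 'a)"
  by unfold_locales (auto simp: vsc_def fun_eq_iff algebra_simps)

definition vsc_basis :: "('n::finite \<Rightarrow> 'a::{field,finite}) set" where
  "vsc_basis = (SOME B. vs.independent B \<and> UNIV \<subseteq> vs.span B)"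

lemma vsc_basis: "vs.independent (vsc_basis :: ('n::finite \<Rightarrow> 'a::{field,finite}) set) \<and>
    UNIV \<subseteq> vs.span (vsc_basis :: ('n \<Rightarrow> 'a) set)"
proof -
  obtain B :: "('n \<Rightarrow> 'a) set" where "vs.independent B" "UNIV \<subseteq> vs.span B"
    using vs.basis_exists[of UNIV] by blast
  then show ?thesis
    unfolding vsc_basis_def by (rule someI[where P="\<lambda>B. vs.independent B \<and> UNIV \<subseteq> vs.span B", OF conjI])
qed

interpretation fvs: finite_dimensional_vector_space
  "vsc :: 'a::{field,finite} \<Rightarrow> ('n::finite \<Rightarrow> 'a) \<Rightarrow> ('n \<Rightarrow> 'a)" vsc_basis
  by unfold_locales (use vsc_basis in auto)

lemma (in finite_dimensional_vector_space) length_le_dim_if_independent_family: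
  fixes w :: "nat \<Rightarrow> 'b" and s :: nat
  assumes mem: "\<And>l. l < s \<Longrightarrow> w l \<in> V"
    and indep: "\<And>b. (\<Sum>l<s. scale (b l) (w l)) = 0 \<Longrightarrow> \<forall>l<s. b l = 0"
  shows "s \<le> dim V"
proof -
  have "inj_on w {..<s}"
  proof
    fix l1 l2 assume l: "l1 \<in> {..<s}" "l2 \<in> {..<s}" "w l1 = w l2"
    show "l1 = l2"
    proof (rule ccontr)
      assume "l1 \<noteq> l2"
      define b :: "nat \<Rightarrow> 'a" where "b l = (if l = l1 then 1 else 0) - (if l = l2 then 1 else 0)" for l
      have "(\<Sum>l<s. scale (b l) (w l)) = (\<Sum>l<s. (if l = l1 then w l else 0) - (if l = l2 then w l else 0))"
        by (intro sum.cong) (auto simp: b_def scale_left_diff_distrib)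
      also have "\<dots> = 0" using l by (simp add: sum_subtractf)
      finally have "b l1 = 0" using indep l(1) by blast
      then show False using \<open>l1 \<noteq> l2\<close> by (simp add: b_def)
    qed
  qed
  moreover have "independent (w ` {..<s})"
  proof
    assume "dependent (w ` {..<s})"
    then obtain u where u: "\<exists>x\<in>w ` {..<s}. u x \<noteq> 0" "(\<Sum>x\<in>w ` {..<s}. scale (u x) x) = 0"
      using dependent_finite[of "w ` {..<s}"] by auto
    then have "(\<Sum>l<s. scale (u (w l)) (w l)) = 0"
      using sum.reindex[OF \<open>inj_on w {..<s}\<close>, of "\<lambda>x. scale (u x) x"] by simp
    then have "\<forall>l<s. u (w l) = 0" by (rule indep)
    then show False using u(1) by auto
  qed
  ultimately show ?thesis
    using independent_card_le_dim[of "w ` {..<s}" V] mem card_image by fastforce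
qed

text \<open>If \<open>M\<close> expresses every coordinate of a vector through its pivot coordinates \<open>ix\<close>, this is the
  space of all vectors obeying the same relations.\<close>

definition relation_space :: "'n list \<Rightarrow> ('n \<Rightarrow> nat \<Rightarrow> 'a::field) \<Rightarrow> ('n \<Rightarrow> 'a) set" where
  "relation_space ix M = {u. \<forall>i. u i = (\<Sum>j<length ix. M i j * u (ix ! j))}"

lemma mem_relation_space_iff:
  "u \<in> relation_space ix M \<longleftrightarrow> (\<forall>i. u i = (\<Sum>j<length ix. M i j * u (ix ! j)))"
  by (simp add: relation_space_def)

lemma subspace_relation_space: "vsubspace (relation_space ix M)"
  unfolding vs.subspace_def
proof (intro conjI ballI allI)
  show "0 \<in> relation_space ix M" by (simp add: relation_space_def)
next
  fix x y assume "x \<in> relation_space ix M" "y \<in> relation_space ix M"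
  then have x: "x i = (\<Sum>j<length ix. M i j * x (ix ! j))"
    and y: "y i = (\<Sum>j<length ix. M i j * y (ix ! j))" for i
    unfolding mem_relation_space_iff by blast+
  have "(x + y) i = (\<Sum>j<length ix. M i j * (x + y) (ix ! j))" for i
  proof -
    have "(x + y) i = (\<Sum>j<length ix. M i j * x (ix ! j)) + (\<Sum>j<length ix. M i j * y (ix ! j))"
      unfolding plus_fun_apply by (rule arg_cong2[where f="(+)", OF x y])
    also have "\<dots> = (\<Sum>j<length ix. M i j * (x + y) (ix ! j))"
      by (simp add: sum.distrib distrib_left)
    finally show ?thesis .
  qed
  then show "x + y \<in> relation_space ix M" unfolding mem_relation_space_iff ..
next
  fix c x assume "x \<in> relation_space ix M"
  then have x: "x i = (\<Sum>j<length ix. M i j * x (ix ! j))" for i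
    unfolding mem_relation_space_iff by blast
  have "vsc c x i = (\<Sum>j<length ix. M i j * vsc c x (ix ! j))" for i
  proof -
    have "vsc c x i = c * (\<Sum>j<length ix. M i j * x (ix ! j))"
      unfolding vsc_apply by (rule arg_cong[OF x])
    also have "\<dots> = (\<Sum>j<length ix. M i j * vsc c x (ix ! j))"
      by (simp add: sum_distrib_left mult.left_commute)
    finally show ?thesis .
  qed
  then show "vsc c x \<in> relation_space ix M" unfolding mem_relation_space_iff ..
qed

lemma dim_relation_space_le: "vdim (relation_space ix M) \<le> length ix"
proof -
  define col where "col j = (\<lambda>i. M i j)" for j
  have "relation_space ix M \<subseteq> vs.span (col ` {..<length ix})"
  proof
    fix u assume u: "u \<in> relation_space ix M"
    have "u i = (\<Sum>j<length ix. vsc (u (ix ! j)) (col j)) i" for i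
    proof -
      have "(\<Sum>j<length ix. vsc (u (ix ! j)) (col j)) i = (\<Sum>j<length ix. M i j * u (ix ! j))"
        by (simp add: sum_apply col_def mult.commute)
      then show ?thesis
        using u[unfolded mem_relation_space_iff, rule_format, of i] by (rule ssubst)
    qed
    then have "u = (\<Sum>j<length ix. vsc (u (ix ! j)) (col j))" ..
    also have "\<dots> \<in> vs.span (col ` {..<length ix})"
      by (intro vs.span_sum vs.span_scale vs.span_base) auto
    finally show "u \<in> vs.span (col ` {..<length ix})" .
  qed
  then have "vdim (relation_space ix M) \<le> card (col ` {..<length ix})"
    by (rule vs.dim_le_card) auto
  also have "\<dots> \<le> length ix" using card_image_le[of "{..<length ix}" col] by simp
  finally show ?thesis .
qed

section \<open>The subfield \<open>F_q\<close>\<close>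

locale Fq_subfield =
  fixes q p e m :: nat and K :: "'a::{field,finite} set"
  assumes prime_p: "prime p" and e_pos: "0 < e" and q_eq: "q = p ^ e"
    and card_UNIV: "CARD('a) = q ^ m" and K_eq: "K = Fsub q"
begin

lemma q_ge_2: "2 \<le> q"
proof -
  have "2 \<le> p" using prime_p prime_ge_2_nat by blast
  then show ?thesis using e_pos q_eq self_le_power[of p e] by simp
qed

lemma CHAR_eq: "CHAR('a) = p"
proof -
  have "prime CHAR('a)"
    by (rule prime_CHAR_semidom) (simp add: finite_imp_CHAR_pos)
  moreover have "CHAR('a) dvd p ^ (e * m)"
    using CHAR_dvd_CARD[where 'a='a] card_UNIV q_eq by (simp add: power_mult)
  ultimately show ?thesis
    using prime_p prime_dvd_power primes_dvd_imp_eq by blast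
qed

lemma add_power_q_power: "(x + y :: 'a) ^ (q ^ l) = x ^ (q ^ l) + y ^ (q ^ l)"
  using freshmans_dream'[of "q ^ l" "e * l" x y] CHAR_eq prime_p q_eq by (simp add: power_mult)

lemma sum_power_q_power: "(sum f A :: 'a) ^ (q ^ l) = (\<Sum>i\<in>A. f i ^ (q ^ l))"
  using freshmans_dream_sum'[of "q ^ l" "e * l" f A] CHAR_eq prime_p q_eq by (simp add: power_mult)

lemma uminus_power_q: "(- x :: 'a) ^ q = - (x ^ q)"
proof -
  have "0 = (x + - x) ^ q" using q_ge_2 by simp
  also have "\<dots> = x ^ q + (- x) ^ q" using add_power_q_power[of x "- x" 1] by simp
  finally show ?thesis by (simp add: eq_neg_iff_add_eq_0 add.commute)
qed

lemma mem_K_iff: "c \<in> K \<longleftrightarrow> c ^ q = c"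
  by (simp add: K_eq Fsub_def)

lemma K_power_q_power: "c \<in> K \<Longrightarrow> c ^ (q ^ l) = c"
proof (induction l)
  case (Suc l)
  have "c ^ (q ^ Suc l) = (c ^ q) ^ (q ^ l)" by (simp add: power_mult mult.commute)
  then show ?case using Suc by (simp add: mem_K_iff)
qed simp

lemma zero_mem_K: "0 \<in> K" using q_ge_2 by (simp add: mem_K_iff)
lemma one_mem_K: "1 \<in> K" by (simp add: mem_K_iff)
lemma add_mem_K: "a \<in> K \<Longrightarrow> b \<in> K \<Longrightarrow> a + b \<in> K"
  using add_power_q_power[of a b 1] by (simp add: mem_K_iff)
lemma uminus_mem_K: "a \<in> K \<Longrightarrow> - a \<in> K" by (simp add: mem_K_iff uminus_power_q)
lemma diff_mem_K: "a \<in> K \<Longrightarrow> b \<in> K \<Longrightarrow> a - b \<in> K"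
  using add_mem_K[of a "- b"] uminus_mem_K[of b] by simp
lemma mult_mem_K: "a \<in> K \<Longrightarrow> b \<in> K \<Longrightarrow> a * b \<in> K" by (simp add: mem_K_iff power_mult_distrib)
lemma inverse_mem_K: "a \<in> K \<Longrightarrow> inverse a \<in> K" by (simp add: mem_K_iff power_inverse)

lemma card_K: "card K = q"
proof (rule antisym)
  define P :: "'a poly" where "P = monom 1 q + [:0, -1:]"
  have "degree P = q"
    unfolding P_def using q_ge_2 by (subst degree_add_eq_left) (auto simp: degree_monom_eq)
  then have "P \<noteq> 0" using q_ge_2 by auto
  have "K \<subseteq> {x. poly P x = 0}" by (auto simp: P_def poly_monom mem_K_iff)
  then have "card K \<le> card {x. poly P x = 0}" by (intro card_mono) auto
  also have "\<dots> \<le> q" using card_poly_roots_bound[OF \<open>P \<noteq> 0\<close>] \<open>degree P = q\<close> by simp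
  finally show "card K \<le> q" .
next
  have "int (q - 1) dvd int (q ^ m - 1)"
    using q_ge_2 power_diff_1_eq[of "int q" m] by (simp add: of_nat_diff)
  then have "q - 1 dvd CARD('a) - 1" by (simp only: int_dvd_int_iff card_UNIV)
  then have "q - 1 \<le> card {x::'a. x ^ (q - 1) = 1}"
    using q_ge_2 by (intro card_roots_of_unity_ge) auto
  also have "\<dots> \<le> card (K - {0})"
  proof (rule card_mono)
    show "{x::'a. x ^ (q - 1) = 1} \<subseteq> K - {0}"
    proof
      fix x :: 'a assume x: "x \<in> {x. x ^ (q - 1) = 1}"
      have "x ^ q = x * x ^ (q - 1)" using q_ge_2 by (simp flip: power_Suc)
      then show "x \<in> K - {0}" using x q_ge_2 by (auto simp: mem_K_iff power_0_left)
    qed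
  qed simp
  finally show "q \<le> card K" using zero_mem_K q_ge_2 by simp
qed

lemma subfield_K: "subfield K field_ring"
proof -
  interpret field field_ring by (rule field_field_ring)
  show ?thesis
  proof (rule subfieldI')
    show "subring K field_ring"
      by (rule subringI) (auto simp: one_mem_K uminus_mem_K mult_mem_K add_mem_K)
    show "inv\<^bsub>field_ring\<^esub> k \<in> K" if "k \<in> K - {\<zero>\<^bsub>field_ring\<^esub>}" for k
      using that field_ring_m_inv[of k] inverse_mem_K by auto
  qed
qed

end

sublocale Fq_subfield \<subseteq> EA: embedded_algebra K "field_ring :: 'a ring"
proof -
  interpret field field_ring by (rule field_field_ring)
  show "embedded_algebra K (field_ring :: 'a ring)"
    by (intro embedded_algebra.intro subfield_K) unfold_locales
qed

section \<open>\<open>F_q\<close>-linear combinations and the rank\<close>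

lemma sum_set_conv_nth: "distinct xs \<Longrightarrow> (\<Sum>a\<in>set xs. f a) = (\<Sum>j<length xs. f (xs ! j))"
  by (simp add: sum.distinct_set_conv_list sum_list_sum_nth atLeast0LessThan)

context Fq_subfield begin

lemma combine_eq_sum: "EA.combine Ks Us = (\<Sum>j<min (length Ks) (length Us). Ks ! j * Us ! j)"
proof (induction Us arbitrary: Ks)
  case (Cons u Us)
  then show ?case
    by (cases Ks) (simp_all del: sum.lessThan_Suc add: sum.lessThan_Suc_shift)
qed simp

lemma mem_Span_iff:
  "a \<in> EA.Span K Us \<longleftrightarrow> (\<exists>c. (\<forall>j<length Us. c j \<in> K) \<and> a = (\<Sum>j<length Us. c j * Us ! j))"
proof -
  have "a \<in> EA.Span K Us \<longleftrightarrow> (\<exists>Ks. set Ks \<subseteq> K \<and> length Ks = length Us \<and> a = EA.combine Ks Us)"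
    by (rule EA.Span_mem_iff_length_version[OF subfield_K]) simp
  also have "\<dots> \<longleftrightarrow> (\<exists>c. (\<forall>j<length Us. c j \<in> K) \<and> a = (\<Sum>j<length Us. c j * Us ! j))"
  proof
    assume "\<exists>Ks. set Ks \<subseteq> K \<and> length Ks = length Us \<and> a = EA.combine Ks Us"
    then obtain Ks where "set Ks \<subseteq> K" "length Ks = length Us" "a = EA.combine Ks Us" by blast
    then show "\<exists>c. (\<forall>j<length Us. c j \<in> K) \<and> a = (\<Sum>j<length Us. c j * Us ! j)"
      by (intro exI[of _ "(!) Ks"]) (auto simp: combine_eq_sum)
  next
    assume "\<exists>c. (\<forall>j<length Us. c j \<in> K) \<and> a = (\<Sum>j<length Us. c j * Us ! j)"
    then obtain c where "\<forall>j<length Us. c j \<in> K" "a = (\<Sum>j<length Us. c j * Us ! j)" by blast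
    then show "\<exists>Ks. set Ks \<subseteq> K \<and> length Ks = length Us \<and> a = EA.combine Ks Us"
      by (intro exI[of _ "map c [0..<length Us]"]) (auto simp: combine_eq_sum)
  qed
  finally show ?thesis .
qed

lemma independent_iff:
  "EA.independent K Us \<longleftrightarrow>
    (\<forall>c. (\<forall>j<length Us. c j \<in> K) \<longrightarrow> (\<Sum>j<length Us. c j * Us ! j) = 0 \<longrightarrow> (\<forall>j<length Us. c j = 0))"
proof
  assume ind: "EA.independent K Us"
  show "\<forall>c. (\<forall>j<length Us. c j \<in> K) \<longrightarrow> (\<Sum>j<length Us. c j * Us ! j) = 0 \<longrightarrow> (\<forall>j<length Us. c j = 0)"
  proof (rule allI, intro impI)
    fix c assume c: "\<forall>j<length Us. c j \<in> K" "(\<Sum>j<length Us. c j * Us ! j) = 0"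
    have "set (map c [0..<length Us]) \<subseteq> K" "EA.combine (map c [0..<length Us]) Us = \<zero>\<^bsub>field_ring\<^esub>"
      using c by (auto simp: combine_eq_sum)
    from EA.independent_imp_trivial_combine[OF subfield_K ind this]
    show "\<forall>j<length Us. c j = 0" by (auto simp: image_subset_iff)
  qed
next
  assume crit: "\<forall>c. (\<forall>j<length Us. c j \<in> K) \<longrightarrow> (\<Sum>j<length Us. c j * Us ! j) = 0 \<longrightarrow> (\<forall>j<length Us. c j = 0)"
  show "EA.independent K Us"
  proof (rule EA.trivial_combine_imp_independent[OF subfield_K])
    fix Ks assume Ks: "set Ks \<subseteq> K" "EA.combine Ks Us = \<zero>\<^bsub>field_ring\<^esub>"
    define c where "c j = (if j < length Ks then Ks ! j else 0)" for j
    have "(\<Sum>j<length Us. c j * Us ! j) = EA.combine Ks Us"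
      unfolding combine_eq_sum by (rule sum.mono_neutral_cong_right) (auto simp: c_def)
    moreover have "\<forall>j<length Us. c j \<in> K" using Ks zero_mem_K by (auto simp: c_def)
    ultimately have c0: "\<forall>j<length Us. c j = 0" using crit Ks by simp
    have "Ks ! j = 0" if "j < min (length Ks) (length Us)" for j
      using that c0[rule_format, of j] by (simp add: c_def)
    then show "set (take (length Us) Ks) \<subseteq> {\<zero>\<^bsub>field_ring\<^esub>}"
      by (auto simp: in_set_conv_nth)
  qed simp
qed

lemma independent_coeffs_unique:
  assumes "EA.independent K Us" and "\<forall>j<length Us. c j \<in> K" and "\<forall>j<length Us. d j \<in> K"
    and "(\<Sum>j<length Us. c j * Us ! j) = (\<Sum>j<length Us. d j * Us ! j)"
  shows "\<forall>j<length Us. c j = d j"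
proof -
  have "\<forall>j<length Us. c j - d j \<in> K" using assms(2,3) diff_mem_K by blast
  moreover have "(\<Sum>j<length Us. (c j - d j) * Us ! j) = 0"
    using assms(4) by (simp add: left_diff_distrib sum_subtractf)
  moreover note assms(1)[unfolded independent_iff, THEN spec, of "\<lambda>j. c j - d j"]
  ultimately have "\<forall>j<length Us. c j - d j = 0" by blast
  then show ?thesis by simp
qed

lemma span_over_finite:
  assumes "finite S"
  shows "span_over K S = {y. \<exists>c. (\<forall>a\<in>S. c a \<in> K) \<and> y = (\<Sum>a\<in>S. c a * a)}"
proof (intro Set.set_eqI iffI)
  fix y assume "y \<in> span_over K S"
  then obtain F c where F: "finite F" "F \<subseteq> S" "\<forall>a\<in>F. c a \<in> K" "y = (\<Sum>a\<in>F. c a * a)"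
    unfolding span_over_def by blast
  define c' where "c' a = (if a \<in> F then c a else 0)" for a
  have "(\<Sum>a\<in>S. c' a * a) = (\<Sum>a\<in>F. c' a * a)"
    using F assms by (intro sum.mono_neutral_right) (auto simp: c'_def)
  also have "\<dots> = y" using F by (simp add: c'_def)
  finally have "y = (\<Sum>a\<in>S. c' a * a)" by simp
  moreover have "\<forall>a\<in>S. c' a \<in> K" using F(3) zero_mem_K by (simp add: c'_def)
  ultimately show "y \<in> {y. \<exists>c. (\<forall>a\<in>S. c a \<in> K) \<and> y = (\<Sum>a\<in>S. c a * a)}"
    by (intro CollectI exI[of _ c']) simp
next
  fix y assume "y \<in> {y. \<exists>c. (\<forall>a\<in>S. c a \<in> K) \<and> y = (\<Sum>a\<in>S. c a * a)}"
  then obtain c where "\<forall>a\<in>S. c a \<in> K" "y = (\<Sum>a\<in>S. c a * a)" by blast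
  then show "y \<in> span_over K S"
    unfolding span_over_def using assms by (intro CollectI exI[of _ S] exI[of _ c]) auto
qed

lemma span_over_set_eq_Span:
  assumes "distinct Us"
  shows "span_over K (set Us) = EA.Span K Us"
proof (intro Set.set_eqI iffI)
  fix y assume "y \<in> span_over K (set Us)"
  then obtain c where "\<forall>a\<in>set Us. c a \<in> K" "y = (\<Sum>a\<in>set Us. c a * a)"
    by (auto simp: span_over_finite)
  then show "y \<in> EA.Span K Us"
    using assms unfolding mem_Span_iff
    by (intro exI[of _ "\<lambda>j. c (Us ! j)"]) (simp add: sum_set_conv_nth)
next
  fix y assume "y \<in> EA.Span K Us"
  then obtain c where c: "\<forall>j<length Us. c j \<in> K" "y = (\<Sum>j<length Us. c j * Us ! j)"
    unfolding mem_Span_iff by blast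
  define idx where "idx = the_inv_into {..<length Us} ((!) Us)"
  have idx: "idx (Us ! j) = j" if "j < length Us" for j
    unfolding idx_def using that assms by (intro the_inv_into_f_f) (auto simp: inj_on_nth)
  have "y = (\<Sum>a\<in>set Us. c (idx a) * a)"
    using c idx assms by (simp add: sum_set_conv_nth)
  moreover have "\<forall>a\<in>set Us. c (idx a) \<in> K"
    using c idx by (auto simp: in_set_conv_nth)
  ultimately show "y \<in> span_over K (set Us)" by (auto simp: span_over_finite)
qed

lemma mem_span_over: "x \<in> S \<Longrightarrow> x \<in> span_over K S"
  unfolding span_over_def using one_mem_K
  by (intro CollectI exI[of _ "{x}"] exI[of _ "\<lambda>_. 1"]) auto

lemma span_over_add:
  assumes "finite S" "x \<in> span_over K S" "y \<in> span_over K S"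
  shows "x + y \<in> span_over K S"
proof -
  obtain c d where c: "\<forall>a\<in>S. c a \<in> K" "x = (\<Sum>a\<in>S. c a * a)"
    and d: "\<forall>a\<in>S. d a \<in> K" "y = (\<Sum>a\<in>S. d a * a)"
    using assms by (auto simp: span_over_finite)
  have "x + y = (\<Sum>a\<in>S. (c a + d a) * a)"
    using c d by (simp add: sum.distrib distrib_right)
  moreover have "\<forall>a\<in>S. c a + d a \<in> K" using c d add_mem_K by blast
  ultimately show ?thesis using assms(1) by (auto simp: span_over_finite)
qed

lemma span_over_scale:
  assumes "finite S" "k \<in> K" "x \<in> span_over K S"
  shows "k * x \<in> span_over K S"
proof -
  obtain c where c: "\<forall>a\<in>S. c a \<in> K" "x = (\<Sum>a\<in>S. c a * a)"
    using assms by (auto simp: span_over_finite)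
  have "k * x = (\<Sum>a\<in>S. (k * c a) * a)"
    using c by (simp add: sum_distrib_left mult.assoc)
  moreover have "\<forall>a\<in>S. k * c a \<in> K" using c assms(2) mult_mem_K by blast
  ultimately show ?thesis using assms(1) by (auto simp: span_over_finite)
qed

lemma span_over_sum:
  fixes n :: nat
  assumes "finite S" "\<And>j. j < n \<Longrightarrow> c j \<in> K" "\<And>j. j < n \<Longrightarrow> x j \<in> span_over K S"
  shows "(\<Sum>j<n. c j * x j) \<in> span_over K S"
  using assms(2,3)
proof (induction n)
  case 0
  have "(0::'a) = (\<Sum>a\<in>S. 0 * a)" by simp
  then show ?case using assms(1) zero_mem_K by (auto simp: span_over_finite)
next
  case (Suc n)
  then have "(\<Sum>j<n. c j * x j) \<in> span_over K S" "c n * x n \<in> span_over K S"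
    using span_over_scale[OF assms(1)] by simp_all
  then show ?case using span_over_add[OF assms(1)] by simp
qed

definition K_coeffs :: "nat \<Rightarrow> (nat \<Rightarrow> 'a) set" where
  "K_coeffs s = (\<Pi>\<^sub>E j\<in>{..<s}. K)"

lemma finite_K_coeffs: "finite (K_coeffs s)"
  by (simp add: K_coeffs_def finite_PiE)

lemma card_K_coeffs: "card (K_coeffs s) = q ^ s"
  by (simp add: K_coeffs_def card_PiE card_K)

lemma zero_mem_K_coeffs: "restrict (\<lambda>_. 0) {..<s} \<in> K_coeffs s"
  using zero_mem_K by (simp add: K_coeffs_def)

lemma inj_on_K_combination:
  assumes "EA.independent K Us"
  shows "inj_on (\<lambda>a. \<Sum>j<length Us. a j * Us ! j) (K_coeffs (length Us))"
proof
  fix a b assume a: "a \<in> K_coeffs (length Us)" and b: "b \<in> K_coeffs (length Us)"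
    and "(\<Sum>j<length Us. a j * Us ! j) = (\<Sum>j<length Us. b j * Us ! j)"
  then have "\<forall>j<length Us. a j = b j"
    using independent_coeffs_unique[OF assms, of a b] by (auto simp: K_coeffs_def)
  then show "a = b" using a b unfolding K_coeffs_def by (auto intro: PiE_ext)
qed

lemma K_combination_nonzero:
  assumes "EA.independent K Us" and "a \<in> K_coeffs (length Us) - {restrict (\<lambda>_. 0) {..<length Us}}"
  shows "(\<Sum>j<length Us. a j * Us ! j) \<noteq> 0"
proof
  assume "(\<Sum>j<length Us. a j * Us ! j) = 0"
  also have "0 = (\<Sum>j<length Us. restrict (\<lambda>_. 0) {..<length Us} j * Us ! j)"
    by (rule sum.neutral[symmetric]) simp
  finally have "a = restrict (\<lambda>_. 0) {..<length Us}"
    using assms zero_mem_K_coeffs by (intro inj_onD[OF inj_on_K_combination[OF assms(1)]]) auto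
  with assms(2) show False by simp
qed

lemma exists_independent_sublist:
  "\<exists>Ws. EA.independent K Ws \<and> set Ws \<subseteq> set Bs \<and> EA.Span K Ws = EA.Span K Bs"
proof (induction Bs)
  case Nil
  then show ?case by (intro exI[of _ "[]"]) auto
next
  case (Cons b Bs)
  then obtain Ws where Ws: "EA.independent K Ws" "set Ws \<subseteq> set Bs" "EA.Span K Ws = EA.Span K Bs"
    by blast
  show ?case
  proof (cases "b \<in> EA.Span K Ws")
    case True
    have "EA.Span K (b # Bs) \<subseteq> EA.Span K Bs"
      using True Ws EA.Span_base_incl[OF subfield_K, of Bs]
      by (intro EA.mono_Span_subset[OF subfield_K]) auto
    moreover have "EA.Span K Bs \<subseteq> EA.Span K (b # Bs)"
      by (intro EA.mono_Span[OF subfield_K]) auto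
    ultimately show ?thesis using Ws by (intro exI[of _ Ws]) auto
  next
    case False
    then have "EA.independent K (b # Ws)" using Ws by (intro EA.li_Cons) auto
    then show ?thesis using Ws by (intro exI[of _ "b # Ws"]) auto
  qed
qed

lemma dim_over_Span:
  assumes ind: "EA.independent K Us"
  shows "dim_over K (EA.Span K Us) = length Us"
  unfolding dim_over_def
proof (rule Least_equality)
  have "distinct Us" using EA.independent_distinct[OF subfield_K ind] .
  then show "\<exists>B. finite B \<and> card B = length Us \<and> B \<subseteq> EA.Span K Us \<and> span_over K B = EA.Span K Us"
    using span_over_set_eq_Span EA.Span_base_incl[OF subfield_K, of Us]
    by (intro exI[of _ "set Us"]) (auto simp: distinct_card)
next
  fix n assume "\<exists>B. finite B \<and> card B = n \<and> B \<subseteq> EA.Span K Us \<and> span_over K B = EA.Span K Us"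
  then obtain B where B: "finite B" "card B = n" "span_over K B = EA.Span K Us" by blast
  obtain Bs where Bs: "set Bs = B" "distinct Bs" using finite_distinct_list[OF B(1)] by blast
  obtain Ws where Ws: "EA.independent K Ws" "set Ws \<subseteq> set Bs" "EA.Span K Ws = EA.Span K Bs"
    using exists_independent_sublist by blast
  have "EA.Span K Bs = EA.Span K Us" using span_over_set_eq_Span[OF Bs(2)] Bs B by simp
  then have "length Us \<le> length Ws"
    using Ws ind EA.Span_base_incl[OF subfield_K, of Us]
    by (intro EA.independent_length_le[OF subfield_K]) auto
  also have "length Ws = card (set Ws)"
    using EA.independent_distinct[OF subfield_K Ws(1)] by (simp add: distinct_card)
  also have "\<dots> \<le> card B" using Ws Bs B by (intro card_mono) auto
  finally show "length Us \<le> n" using B by simp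
qed

lemma rk_pivots:
  fixes v :: "'n::finite \<Rightarrow> 'a"
  obtains ix where "length ix = rk q v" "EA.independent K (map v ix)"
    "span_over K (range v) = EA.Span K (map v ix)"
proof -
  obtain Bs where Bs: "set Bs = range v" "distinct Bs"
    using finite_distinct_list[of "range v"] by auto
  obtain Ws where Ws: "EA.independent K Ws" "set Ws \<subseteq> set Bs" "EA.Span K Ws = EA.Span K Bs"
    using exists_independent_sublist by blast
  have span: "span_over K (range v) = EA.Span K Ws"
    using Ws(3) span_over_set_eq_Span[OF Bs(2)] Bs(1) by simp
  define ix where "ix = map (inv_into UNIV v) Ws"
  have "map v ix = Ws"
    unfolding ix_def map_map by (rule map_idI) (use Ws(2) Bs(1) in \<open>auto simp: f_inv_into_f\<close>)
  moreover have "rk q v = length Ws"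
    using dim_over_Span[OF Ws(1)] span by (simp add: rk_def K_eq)
  ultimately show ?thesis
    using that[of ix] Ws(1) span by (simp add: ix_def del: EA.Span.simps)
qed

lemma rk_ge_length:
  fixes v :: "'n::finite \<Rightarrow> 'a"
  assumes "EA.independent K Us" and "set Us \<subseteq> span_over K (range v)"
  shows "length Us \<le> rk q v"
proof -
  obtain ix where ix: "length ix = rk q v" "EA.independent K (map v ix)"
    "span_over K (range v) = EA.Span K (map v ix)"
    by (rule rk_pivots)
  have "length Us \<le> length (map v ix)"
    using assms(2) ix(3) by (intro EA.independent_length_le[OF subfield_K assms(1) ix(2)]) simp
  then show ?thesis using ix(1) by simp
qed

lemma independent_coeffs_nth:
  assumes ind: "EA.independent K Us" and "j < length Us" and "l < length Us"
    and c: "\<forall>l<length Us. c l \<in> K" and eq: "Us ! j = (\<Sum>l<length Us. c l * Us ! l)"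
  shows "c l = (if l = j then 1 else 0)"
proof -
  define \<delta> where "\<delta> l = (if l = j then 1 else (0::'a))" for l
  have "(\<Sum>l<length Us. \<delta> l * Us ! l) = (\<Sum>l<length Us. if l = j then Us ! l else 0)"
    by (intro sum.cong) (auto simp: \<delta>_def)
  also have "\<dots> = Us ! j" using assms(2) by simp
  finally have "(\<Sum>l<length Us. c l * Us ! l) = (\<Sum>l<length Us. \<delta> l * Us ! l)" using eq by simp
  moreover have "\<forall>l<length Us. \<delta> l \<in> K" using one_mem_K zero_mem_K by (simp add: \<delta>_def)
  ultimately have "\<forall>l<length Us. c l = \<delta> l" using independent_coeffs_unique[OF ind c] by blast
  then show ?thesis using assms(3) by (simp add: \<delta>_def)
qed

lemma rank_coordinates:
  fixes v :: "'n::finite \<Rightarrow> 'a"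
  obtains ix M where "length ix = rk q v" "EA.independent K (map v ix)"
    "\<And>i j. j < rk q v \<Longrightarrow> M i j \<in> K"
    "\<And>i. v i = (\<Sum>j<rk q v. M i j * v (ix ! j))"
    "\<And>j l. j < rk q v \<Longrightarrow> l < rk q v \<Longrightarrow> M (ix ! j) l = (if l = j then 1 else 0)"
proof -
  obtain ix where ix: "length ix = rk q v" "EA.independent K (map v ix)"
    "span_over K (range v) = EA.Span K (map v ix)"
    by (rule rk_pivots)
  have "\<exists>c. (\<forall>j<rk q v. c j \<in> K) \<and> v i = (\<Sum>j<rk q v. c j * v (ix ! j))" for i
  proof -
    have "v i \<in> EA.Span K (map v ix)" using ix(3) mem_span_over[of "v i" "range v"] by auto
    then show ?thesis using ix(1) by (simp add: mem_Span_iff del: EA.Span.simps)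
  qed
  then obtain M where M_K: "\<And>i. \<forall>j<rk q v. M i j \<in> K"
    and M_eq: "\<And>i. v i = (\<Sum>j<rk q v. M i j * v (ix ! j))"
    by metis
  have "M (ix ! j) l = (if l = j then 1 else 0)" if "j < rk q v" "l < rk q v" for j l
  proof (rule independent_coeffs_nth[OF ix(2)])
    have "(\<Sum>l<rk q v. M (ix ! j) l * v (ix ! l)) = (\<Sum>l<rk q v. M (ix ! j) l * map v ix ! l)"
      using ix(1) by (intro sum.cong) auto
    then show "map v ix ! j = (\<Sum>l<length (map v ix). M (ix ! j) l * map v ix ! l)"
      using M_eq[of "ix ! j"] that ix(1) by simp
  qed (use that ix(1) M_K in auto)
  then show thesis using that ix M_K M_eq by blast
qed

section \<open>Frobenius powers of a vector\<close>

lemma K_combination_power_q_power: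
  fixes n :: nat and c x :: "nat \<Rightarrow> 'a"
  assumes "\<And>j. j < n \<Longrightarrow> c j \<in> K"
  shows "(\<Sum>j<n. c j * x j) ^ (q ^ l) = (\<Sum>j<n. c j * x j ^ (q ^ l))"
proof -
  have "(\<Sum>j<n. c j * x j) ^ (q ^ l) = (\<Sum>j<n. c j ^ (q ^ l) * x j ^ (q ^ l))"
    by (simp add: sum_power_q_power power_mult_distrib)
  also have "\<dots> = (\<Sum>j<n. c j * x j ^ (q ^ l))"
    using assms K_power_q_power by (intro sum.cong) auto
  finally show ?thesis .
qed

lemma q_polynomial_K_linear:
  fixes b c x :: "nat \<Rightarrow> 'a"
  assumes "\<And>j. j < n \<Longrightarrow> c j \<in> K"
  shows "(\<Sum>l<s. b l * (\<Sum>j<n. c j * x j) ^ (q ^ l)) = (\<Sum>j<n. c j * (\<Sum>l<s. b l * x j ^ (q ^ l)))"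
proof -
  have "(\<Sum>l<s. b l * (\<Sum>j<n. c j * x j) ^ (q ^ l)) = (\<Sum>l<s. \<Sum>j<n. c j * (b l * x j ^ (q ^ l)))"
    using K_combination_power_q_power[of n c, OF assms] by (simp add: sum_distrib_left mult.left_commute)
  also have "\<dots> = (\<Sum>j<n. c j * (\<Sum>l<s. b l * x j ^ (q ^ l)))"
    by (subst sum.swap) (simp add: sum_distrib_left)
  finally show ?thesis .
qed

lemma card_roots_q_polynomial_le:
  fixes b :: "nat \<Rightarrow> 'a"
  assumes "l0 < s" and "b l0 \<noteq> 0"
  shows "card {x. (\<Sum>l<s. b l * x ^ (q ^ l)) = 0} \<le> q ^ (s - 1)"
proof -
  define P :: "'a poly" where "P = (\<Sum>l<s. monom (b l) (q ^ l))"
  have roots: "{x. (\<Sum>l<s. b l * x ^ (q ^ l)) = 0} = {x. poly P x = 0}"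
    by (simp add: P_def poly_sum poly_monom)
  have "coeff P (q ^ l0) = b l0"
    using assms(1) q_ge_2 by (simp add: P_def coeff_sum power_inject_exp)
  then have "P \<noteq> 0" using assms(2) by auto
  have "degree P \<le> q ^ (s - 1)"
    unfolding P_def
  proof (rule degree_sum_le)
    fix l assume "l \<in> {..<s}"
    then have "q ^ l \<le> q ^ (s - 1)" using q_ge_2 by (intro power_increasing) auto
    then show "degree (monom (b l) (q ^ l)) \<le> q ^ (s - 1)"
      using degree_monom_le order.trans by blast
  qed simp
  then show ?thesis
    unfolding roots using card_poly_roots_bound[OF \<open>P \<noteq> 0\<close>] by linarith
qed

lemma frobenius_powers_independent:
  fixes v :: "'n::finite \<Rightarrow> 'a" and b :: "nat \<Rightarrow> 'a"
  assumes vanish: "\<And>i. (\<Sum>l<rk q v. b l * v i ^ (q ^ l)) = 0"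
  shows "\<forall>l<rk q v. b l = 0"
proof (rule ccontr)
  define s where "s = rk q v"
  assume "\<not> (\<forall>l<rk q v. b l = 0)"
  then obtain l0 where l0: "l0 < s" "b l0 \<noteq> 0" by (auto simp: s_def)
  obtain ix where ix: "length ix = s" "EA.independent K (map v ix)"
    using rk_pivots s_def by metis
  define comb where "comb a = (\<Sum>j<s. a j * v (ix ! j))" for a
  have "inj_on comb (K_coeffs s)"
    using inj_on_K_combination[OF ix(2)] ix(1) unfolding comb_def by simp
  then have "card (comb ` K_coeffs s) = q ^ s" by (simp add: card_image card_K_coeffs)
  moreover have "comb ` K_coeffs s \<subseteq> {x. (\<Sum>l<s. b l * x ^ (q ^ l)) = 0}"
  proof clarify
    fix a assume "a \<in> K_coeffs s"
    then have "(\<Sum>l<s. b l * comb a ^ (q ^ l)) = (\<Sum>j<s. a j * (\<Sum>l<s. b l * v (ix ! j) ^ (q ^ l)))"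
      unfolding comb_def by (intro q_polynomial_K_linear) (auto simp: K_coeffs_def)
    also have "\<dots> = 0" using vanish s_def by simp
    finally show "(\<Sum>l<s. b l * comb a ^ (q ^ l)) = 0" .
  qed
  ultimately have "q ^ s \<le> card {x. (\<Sum>l<s. b l * x ^ (q ^ l)) = 0}"
    using card_mono[of "{x. (\<Sum>l<s. b l * x ^ (q ^ l)) = 0}" "comb ` K_coeffs s"] by simp
  also have "\<dots> \<le> q ^ (s - 1)" using l0 by (rule card_roots_q_polynomial_le)
  also have "\<dots> < q ^ s" using q_ge_2 l0 by (intro power_strict_increasing) auto
  finally show False by simp
qed

lemma rk_le_dim_if_frobenius_closed:
  fixes V :: "('n::finite \<Rightarrow> 'a) set"
  assumes closed: "\<And>x. x \<in> V \<Longrightarrow> frob_vec q x \<in> V" and "v \<in> V"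
  shows "rk q v \<le> vdim V"
proof (rule fvs.length_le_dim_if_independent_family[where w = "\<lambda>l i. v i ^ (q ^ l)"])
  show "(\<lambda>i. v i ^ (q ^ l)) \<in> V" for l
  proof (induction l)
    case (Suc l)
    have "(\<lambda>i. v i ^ (q ^ Suc l)) = frob_vec q (\<lambda>i. v i ^ (q ^ l))"
      by (simp add: frob_vec_def fun_eq_iff power_mult[symmetric] mult.commute)
    then show ?case using closed Suc by simp
  qed (use \<open>v \<in> V\<close> in simp)
next
  fix b assume "(\<Sum>l<rk q v. vsc (b l) (\<lambda>i. v i ^ (q ^ l))) = 0"
  then have "(\<Sum>l<rk q v. b l * v i ^ (q ^ l)) = 0" for i
    by (auto simp: fun_eq_iff sum_apply)
  then show "\<forall>l<rk q v. b l = 0" by (rule frobenius_powers_independent)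
qed

section \<open>Subspaces of maximal rank\<close>

lemma frob_vec_mem_relation_space:
  assumes M_K: "\<And>i j. j < length ix \<Longrightarrow> M i j \<in> K" and u: "u \<in> relation_space ix M"
  shows "frob_vec q u \<in> relation_space ix M"
  unfolding mem_relation_space_iff
proof
  fix i
  have "frob_vec q u i = (\<Sum>j<length ix. M i j * u (ix ! j)) ^ q"
    unfolding frob_vec_def using u[unfolded mem_relation_space_iff, rule_format, of i] by (rule arg_cong)
  also have "\<dots> = (\<Sum>j<length ix. M i j * frob_vec q u (ix ! j))"
    using K_combination_power_q_power[of "length ix" "M i" _ 1] M_K by (simp add: frob_vec_def)
  finally show "frob_vec q u i = (\<Sum>j<length ix. M i j * frob_vec q u (ix ! j))" .
qed

lemma exists_scalar_avoiding_combinations: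
  fixes x y :: "nat \<Rightarrow> 'a"
  assumes nonzero: "\<And>a. a \<in> K_coeffs s - {restrict (\<lambda>_. 0) {..<s}} \<Longrightarrow> (\<Sum>j<s. a j * x j) \<noteq> 0"
    and "s < m"
  obtains c where "c \<noteq> 0"
    "\<And>a b. a \<in> K_coeffs s - {restrict (\<lambda>_. 0) {..<s}} \<Longrightarrow> b \<in> K \<Longrightarrow>
      (\<Sum>j<s. a j * x j) + c * ((\<Sum>j<s. a j * y j) + b * z) \<noteq> 0"
proof -
  define X where "X = (K_coeffs s - {restrict (\<lambda>_. 0) {..<s}}) \<times> K"
  have "finite X" by (simp add: X_def finite_K_coeffs)
  have "card X = (q ^ s - 1) * q"
    using zero_mem_K_coeffs finite_K_coeffs by (simp add: X_def card_cartesian_product card_K_coeffs card_K)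
  also have "\<dots> = q ^ s * q - q" by (simp add: diff_mult_distrib)
  moreover have "q \<le> q ^ s * q" using q_ge_2 by simp
  ultimately have "Suc (card X) < q ^ s * q" using q_ge_2 by linarith
  also have "q ^ s * q = q ^ Suc s" by simp
  also have "\<dots> \<le> q ^ m" using \<open>s < m\<close> q_ge_2 by (intro power_increasing) auto
  also have "\<dots> = CARD('a)" by (rule card_UNIV[symmetric])
  finally have "Suc (card X) < CARD('a)" .
  moreover have "(\<lambda>(a, b). \<Sum>j<s. a j * x j) p \<noteq> 0" if "p \<in> X" for p
    using that nonzero by (auto simp: X_def)
  ultimately show thesis
  proof (rule exists_scalar_avoiding[OF \<open>finite X\<close>, where D = "\<lambda>(a, b). (\<Sum>j<s. a j * y j) + b * z"])
    fix c assume "c \<noteq> 0" and avoid: "\<And>p. p \<in> X \<Longrightarrow>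
      (\<lambda>(a, b). \<Sum>j<s. a j * x j) p + c * (\<lambda>(a, b). (\<Sum>j<s. a j * y j) + b * z) p \<noteq> 0"
    show thesis
    proof (rule that[OF \<open>c \<noteq> 0\<close>])
      fix a b assume "a \<in> K_coeffs s - {restrict (\<lambda>_. 0) {..<s}}" "b \<in> K"
      then show "(\<Sum>j<s. a j * x j) + c * ((\<Sum>j<s. a j * y j) + b * z) \<noteq> 0"
        using avoid[of "(a, b)"] by (simp add: X_def)
    qed
  qed
qed

lemma independent_append_defect:
  fixes x y :: "nat \<Rightarrow> 'a"
  assumes good: "\<And>a b. a \<in> K_coeffs s - {restrict (\<lambda>_. 0) {..<s}} \<Longrightarrow> b \<in> K \<Longrightarrow>
      (\<Sum>j<s. a j * x j) + c * ((\<Sum>j<s. a j * y j) + b * z) \<noteq> 0"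
    and "c \<noteq> 0" and "z \<noteq> 0"
  shows "EA.independent K (map (\<lambda>j. x j + c * y j) [0..<s] @ [c * z])" (is "EA.independent K ?Us")
  unfolding independent_iff
proof (rule allI, intro impI)
  fix d assume d: "\<forall>j<length ?Us. d j \<in> K" and zero_comb: "(\<Sum>j<length ?Us. d j * ?Us ! j) = 0"
  define a where "a = restrict d {..<s}"
  have "length ?Us = Suc s" by simp
  then have split: "(\<Sum>j<length ?Us. d j * ?Us ! j) = (\<Sum>j<s. d j * ?Us ! j) + d s * (c * z)"
    by (simp add: nth_append)
  have "(\<Sum>j<s. d j * ?Us ! j) = (\<Sum>j<s. a j * x j + c * (a j * y j))"
    by (intro sum.cong) (auto simp: nth_append a_def algebra_simps)
  then have "(\<Sum>j<s. a j * x j) + c * ((\<Sum>j<s. a j * y j) + d s * z) = 0"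
    using zero_comb split by (simp add: sum.distrib sum_distrib_left algebra_simps)
  moreover have "a \<in> K_coeffs s" "d s \<in> K" using d by (auto simp: K_coeffs_def a_def)
  ultimately have "a = restrict (\<lambda>_. 0) {..<s}" using good by blast
  then have "\<forall>j<s. d j = 0" by (auto simp: a_def fun_eq_iff split: if_splits)
  then have "(\<Sum>j<s. d j * ?Us ! j) = 0" by simp
  then have "d s = 0" using zero_comb split \<open>z \<noteq> 0\<close> \<open>c \<noteq> 0\<close> by (simp add: nth_append)
  then show "\<forall>j<length ?Us. d j = 0" using \<open>\<forall>j<s. d j = 0\<close> by (auto simp: less_Suc_eq)
qed

lemma defect_mem_span_over:
  fixes v w :: "'n::finite \<Rightarrow> 'a"
  assumes M_K: "\<And>i j. j < s \<Longrightarrow> M i j \<in> K" and M_eq: "\<And>i. v i = (\<Sum>j<s. M i j * v (ix ! j))"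
  shows "c * (w i0 - (\<Sum>j<s. M i0 j * w (ix ! j))) \<in> span_over K (range (v + vsc c w))"
proof -
  let ?u = "v + vsc c w"
  have "?u i0 - (\<Sum>j<s. M i0 j * ?u (ix ! j)) =
      (v i0 - (\<Sum>j<s. M i0 j * v (ix ! j))) + c * (w i0 - (\<Sum>j<s. M i0 j * w (ix ! j)))"
    by (simp add: sum.distrib sum_distrib_left algebra_simps)
  moreover have "v i0 - (\<Sum>j<s. M i0 j * v (ix ! j)) = 0" using M_eq[of i0] by simp
  ultimately have "c * (w i0 - (\<Sum>j<s. M i0 j * w (ix ! j))) = ?u i0 + (- 1) * (\<Sum>j<s. M i0 j * ?u (ix ! j))"
    by simp
  also have "\<dots> \<in> span_over K (range ?u)"
    using M_K one_mem_K uminus_mem_K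
    by (intro span_over_add span_over_scale span_over_sum mem_span_over) auto
  finally show ?thesis .
qed

text \<open>The relation violated by \<open>w\<close> has defect \<open>z \<noteq> 0\<close> at \<open>w\<close> and \<open>0\<close> at \<open>v\<close>, hence \<open>c z\<close> at \<open>v + c w\<close>;
  for a generic \<open>c\<close> this defect is \<open>F_q\<close>-independent of the pivot coordinates of \<open>v + c w\<close>.\<close>

lemma rank_increase:
  fixes v w :: "'n::finite \<Rightarrow> 'a"
  assumes ix: "length ix = rk q v" "EA.independent K (map v ix)"
    and M_K: "\<And>i j. j < rk q v \<Longrightarrow> M i j \<in> K"
    and M_eq: "\<And>i. v i = (\<Sum>j<rk q v. M i j * v (ix ! j))"
    and violated: "w i0 \<noteq> (\<Sum>j<rk q v. M i0 j * w (ix ! j))"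
    and "rk q v < m"
  obtains c where "rk q v < rk q (v + vsc c w)"
proof -
  define s where "s = rk q v"
  define z where "z = w i0 - (\<Sum>j<s. M i0 j * w (ix ! j))"
  have "z \<noteq> 0" using violated by (simp add: z_def s_def)
  have pivots_nonzero: "(\<Sum>j<s. a j * v (ix ! j)) \<noteq> 0"
    if "a \<in> K_coeffs s - {restrict (\<lambda>_. 0) {..<s}}" for a
  proof -
    have "(\<Sum>j<s. a j * v (ix ! j)) = (\<Sum>j<length (map v ix). a j * map v ix ! j)"
      using ix(1) s_def by (intro sum.cong) auto
    then show ?thesis using K_combination_nonzero[OF ix(2)] that ix(1) s_def by simp
  qed
  show thesis
  proof (rule exists_scalar_avoiding_combinations[OF pivots_nonzero, where y = "\<lambda>j. w (ix ! j)" and z = z])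
    show "s < m" using \<open>rk q v < m\<close> s_def by simp
  next
    fix c assume "c \<noteq> 0" and good: "\<And>a b. a \<in> K_coeffs s - {restrict (\<lambda>_. 0) {..<s}} \<Longrightarrow> b \<in> K \<Longrightarrow>
      (\<Sum>j<s. a j * v (ix ! j)) + c * ((\<Sum>j<s. a j * w (ix ! j)) + b * z) \<noteq> 0"
    define u where "u = v + vsc c w"
    define Us where "Us = map (\<lambda>j. v (ix ! j) + c * w (ix ! j)) [0..<s] @ [c * z]"
    have "EA.independent K Us"
      unfolding Us_def using good \<open>c \<noteq> 0\<close> \<open>z \<noteq> 0\<close> by (rule independent_append_defect)
    moreover have "set Us \<subseteq> span_over K (range u)"
    proof -
      have "c * z \<in> span_over K (range u)"
        unfolding u_def z_def s_def by (rule defect_mem_span_over[OF M_K M_eq])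
      moreover have "v (ix ! j) + c * w (ix ! j) \<in> span_over K (range u)" for j
        using mem_span_over[of "u (ix ! j)" "range u"] by (simp add: u_def)
      ultimately show ?thesis by (auto simp: Us_def)
    qed
    ultimately have "length Us \<le> rk q u" by (rule rk_ge_length)
    then show thesis using that[of c] by (simp add: Us_def u_def s_def)
  qed
qed

lemma maxrk_attained:
  fixes A :: "('n::finite \<Rightarrow> 'a) set"
  assumes "vsubspace A"
  obtains v where "v \<in> A" "rk q v = maxrk q A" "\<And>u. u \<in> A \<Longrightarrow> rk q u \<le> rk q v"
proof -
  have "maxrk q A \<in> rk q ` A"
    unfolding maxrk_def using vs.subspace_0[OF assms] by (intro Max_in) auto
  then obtain v where "v \<in> A" "rk q v = maxrk q A" by auto
  then show thesis using that by (simp add: maxrk_def)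
qed

lemma subspace_subset_relation_space:
  fixes A :: "('n::finite \<Rightarrow> 'a) set"
  assumes A: "vsubspace A" and "v \<in> A" and max: "\<And>u. u \<in> A \<Longrightarrow> rk q u \<le> rk q v"
    and "CARD('n) \<le> m"
    and ix: "length ix = rk q v" "EA.independent K (map v ix)"
    and M_K: "\<And>i j. j < rk q v \<Longrightarrow> M i j \<in> K"
    and M_eq: "\<And>i. v i = (\<Sum>j<rk q v. M i j * v (ix ! j))"
    and M_pivot: "\<And>j l. j < rk q v \<Longrightarrow> l < rk q v \<Longrightarrow> M (ix ! j) l = (if l = j then 1 else 0)"
  shows "A \<subseteq> relation_space ix M"
proof
  fix w assume "w \<in> A"
  show "w \<in> relation_space ix M"
  proof (rule ccontr)
    assume "w \<notin> relation_space ix M"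
    then obtain i0 where i0: "w i0 \<noteq> (\<Sum>j<rk q v. M i0 j * w (ix ! j))"
      using ix(1) by (auto simp: mem_relation_space_iff)
    have "i0 \<notin> set ix"
    proof
      assume "i0 \<in> set ix"
      then obtain j0 where j0: "j0 < rk q v" "i0 = ix ! j0" using ix(1) by (auto simp: in_set_conv_nth)
      then have "(\<Sum>j<rk q v. M i0 j * w (ix ! j)) = (\<Sum>j<rk q v. if j = j0 then w (ix ! j) else 0)"
        using M_pivot by (intro sum.cong) auto
      then show False using i0 j0 by simp
    qed
    moreover have "distinct ix"
      using EA.independent_distinct[OF subfield_K ix(2)] by (simp add: distinct_map)
    ultimately have "card (insert i0 (set ix)) = Suc (rk q v)" using ix(1) by (simp add: distinct_card)
    then have "rk q v < m" using card_mono[of UNIV "insert i0 (set ix)"] \<open>CARD('n) \<le> m\<close> by simp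
    then obtain c where "rk q v < rk q (v + vsc c w)"
      using rank_increase[OF ix M_K M_eq i0] by blast
    moreover have "v + vsc c w \<in> A"
      using A \<open>v \<in> A\<close> \<open>w \<in> A\<close> by (intro vs.subspace_add vs.subspace_scale)
    ultimately show False using max by (simp add: not_le[symmetric])
  qed
qed

text \<open>\<open>R\<close> is the relation space of a vector of maximal rank in \<open>A\<close>.\<close>

lemma relation_space_of_maximal_rank:
  fixes A :: "('n::finite \<Rightarrow> 'a) set"
  assumes "vsubspace A" and "CARD('n) \<le> m"
  obtains R where "A \<subseteq> R" "vsubspace R" "vdim R \<le> maxrk q A" "\<And>x. x \<in> R \<Longrightarrow> frob_vec q x \<in> R"
proof -
  obtain v where v: "v \<in> A" "rk q v = maxrk q A" "\<And>u. u \<in> A \<Longrightarrow> rk q u \<le> rk q v"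
    using maxrk_attained[OF assms(1)] by blast
  obtain ix M where ix: "length ix = rk q v" "EA.independent K (map v ix)"
    and M_K: "\<And>i j. j < rk q v \<Longrightarrow> M i j \<in> K"
    and M_eq: "\<And>i. v i = (\<Sum>j<rk q v. M i j * v (ix ! j))"
    and M_pivot: "\<And>j l. j < rk q v \<Longrightarrow> l < rk q v \<Longrightarrow> M (ix ! j) l = (if l = j then 1 else 0)"
    using rank_coordinates[of v] by blast
  show thesis
  proof (rule that)
    show "A \<subseteq> relation_space ix M"
      by (rule subspace_subset_relation_space[OF assms(1) v(1) v(3) assms(2) ix M_K M_eq M_pivot])
    show "vsubspace (relation_space ix M)" by (rule subspace_relation_space)
    show "vdim (relation_space ix M) \<le> maxrk q A"
      using dim_relation_space_le[of ix M] ix(1) v(2) by simp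
    show "frob_vec q x \<in> relation_space ix M" if "x \<in> relation_space ix M" for x
      using frob_vec_mem_relation_space[OF _ that] M_K ix(1) by simp
  qed
qed

lemma Lam_eq_AG:
  assumes "CARD('n::finite) \<le> m"
  shows "Lam q = (AG q :: ('n \<Rightarrow> 'a) set set)"
proof (intro Set.set_eqI iffI)
  fix V :: "('n \<Rightarrow> 'a) set" assume "V \<in> Lam q"
  then have V: "vsubspace V" and closed: "\<And>x. x \<in> V \<Longrightarrow> frob_vec q x \<in> V"
    by (auto simp: Lam_def)
  obtain R where "V \<subseteq> R" "vsubspace R" "vdim R \<le> maxrk q V"
    "\<And>x. x \<in> R \<Longrightarrow> frob_vec q x \<in> R"
    by (rule relation_space_of_maximal_rank[OF V assms]) blast
  then have "vdim V \<le> maxrk q V" using fvs.dim_subset[of V R] by linarith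
  moreover obtain v where "v \<in> V" "rk q v = maxrk q V"
    using maxrk_attained[OF V] by blast
  then have "maxrk q V \<le> vdim V" using rk_le_dim_if_frobenius_closed[OF closed, of v] by simp
  ultimately show "V \<in> AG q" using V by (simp add: AG_def)
next
  fix A :: "('n \<Rightarrow> 'a) set" assume "A \<in> AG q"
  then have A: "vsubspace A" and dim_eq: "vdim A = maxrk q A" by (auto simp: AG_def)
  obtain R where R: "A \<subseteq> R" "vsubspace R" "vdim R \<le> maxrk q A"
    and closed: "\<And>x. x \<in> R \<Longrightarrow> frob_vec q x \<in> R"
    by (rule relation_space_of_maximal_rank[OF A assms]) blast
  have "A = R"
    using R dim_eq by (intro fvs.subspace_dim_equal[OF A R(2) R(1)]) simp
  then show "A \<in> Lam q" using A closed by (simp add: Lam_def)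
qed

end

theorem corollary3p13:
  fixes q m k t r :: nat
    and C :: "('n::finite \<Rightarrow> 'a::{field,finite}) set"
  assumes q_pp: "\<exists>p e. prime p \<and> 0 < e \<and> q = p ^ e"
    and card_field: "CARD('a) = q ^ m"
    and k_ge: "1 \<le> k" and k_le: "k \<le> m"
    and card_idx: "CARD('n) = k"
    and C_sub: "vsubspace C"
    and C_nz: "C \<noteq> {0}"
    and C_dim: "vdim C = t" and t_ge: "1 \<le> t" and t_le: "t \<le> k"
    and r_ge: "1 \<le> r" and r_le: "r \<le> t"
  shows "gen_rank_weight q C r = Min {vdim A | A. A \<in> AG q \<and> vdim (A \<inter> C) \<ge> r}"
proof -
  obtain p e where "prime p" "0 < e" "q = p ^ e" using q_pp by blast
  then interpret Fq_subfield q p e m "Fsub q :: 'a set"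
    using card_field by unfold_locales auto
  have "Lam q = (AG q :: ('n \<Rightarrow> 'a) set set)"
    by (rule Lam_eq_AG) (use card_idx k_le in simp)
  then show ?thesis by (simp add: gen_rank_weight_def)
qed

end
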